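(* Consider the system $\Sigma$: $x_{t+1}=f_u(x_t)$ with a finite control set $\mathcal{U}$, and let $\mathcal{X}\subseteq\mathbb{R}^n$ and $\Omega\subseteq\mathcal{X}$ be compact. Suppose $\varphi(\Omega)$ is $\delta$-robustly realizable for $\Sigma$, and that there exist $\rho>0$ and inclusion functions $[f_u]$ of $f_u$ ($u\in\mathcal{U}$) with $\mathrm{wid}([f_u]([x]))\le\rho\,\mathrm{wid}([x])$ for all boxes $[x]\subseteq\mathcal{X}$ and all $u\in\mathcal{U}$. For $\varepsilon>0$ let $Y^\varepsilon$ be the interval part of the output $K$ of Algorithm 3 run with inputs $\Omega,\mathcal{X},\{[f_u]\}_{u\in\mathcal{U}},\varepsilon$. Then Algorithm 3 terminates in finitely many steps, and if $\rho\varepsilon\le\delta$ then $$\mathrm{Win}^\delta_\Sigma(\varphi(\Omega))\subseteq Y^\varepsilon\subseteq\mathrm{Win}_\Sigma(\varphi(\Omega)).$$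
   Context: For $\delta\ge0$, $\Sigma^\delta$ has transitions $x_{t+1}=f_{u_t}(x_t)+d_t$, $u_t\in\mathcal{U}$, $|d_t|\le\delta$ ($|\cdot|$ infinity norm), $f_u$ continuous; $\Sigma=\Sigma^0$. A solution is an infinite sequence of states in $\mathcal{X}$ obeying these transitions. A solution satisfies $\varphi(\Omega)$ if it is in $\Omega$ from some time on. A memoryless strategy is $\kappa:\mathbb{R}^n\to2^{\mathcal{U}}$; a control sequence conforms to it if $u_k\in\kappa(x_k)$ for all $k$. $\mathrm{Win}^\delta_\Sigma(\varphi(\Omega))$ is the set of $x_0\in\mathcal{X}$ for which some memoryless $\kappa$ makes every solution of $\Sigma^\delta$ from $x_0$ with control conforming to $\kappa$ (and any disturbances) satisfy $\varphi(\Omega)$; $\mathrm{Win}_\Sigma=\mathrm{Win}^0_\Sigma$. $\varphi(\Omega)$ is $\delta$-robustly realizable if $\mathrm{Win}^\delta_\Sigma(\varphi(\Omega))\ne\emptyset$. $\mathrm{Pre}(Y)=\{x\in\mathcal{X}:\exists u,\ f_u(x)\in Y\}$. Boxes, width and inclusion functions: a box is a product of compact intervals, $\mathrm{wid}$ its maximal side length; $[f]$ is an inclusion function of $f$ if $f([x])\subseteq[f]([x])$ and $\mathrm{wid}([f]([x]))\to0$ as $\mathrm{wid}([x])\to0$. Sets are represented as finite unions (lists) of boxes. $\textsc{CPred}(\{[f_u]\},X,Y,\varepsilon)$: start with $K=\underline{X}=\Delta X=X_c=\emptyset$ and a list of the boxes of $X$; repeatedly remove a box $[x]$: if $[f_u]([x])\cap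 Y=\emptyset$ for all $u$, add it to $X_c$; else if $[f_u]([x])\subseteq Y$ for some $u$, add $[x]$ to $\underline{X}$ and $([x],u)$ to $K$; else if $\mathrm{wid}([x])<\varepsilon$ add it to $\Delta X$; else bisect it at the midpoint of a coordinate of maximal side length and put both halves in the list. Return $(K,\underline{X},\Delta X,X_c)$. Algorithm 3 (inputs $\Omega,\mathcal{X},\{[f_u]\},\varepsilon$): $K\leftarrow\emptyset$; $\widetilde{Y}\leftarrow\emptyset$, $Y\leftarrow\mathcal{X}$; $G_1\leftarrow\mathcal{X}\setminus\Omega$, $G_2\leftarrow\mathcal{X}\cap\Omega$. While $\widetilde{Y}\ne Y$: $Y\leftarrow\widetilde{Y}$; $(K_z,\underline{Z},\Delta Z,Z_c)\leftarrow\textsc{CPred}(\{[f_u]\},G_1,Y,\varepsilon)$; $K\leftarrow K\cup K_z$; $Z\leftarrow Y\cup\underline{Z}$; $X\leftarrow\emptyset$, $\widetilde{X}\leftarrow Z\cup G_2$, $V\leftarrow G_2$, $G_2\leftarrow\emptyset$; while $\widetilde{X}\ne X$: {$X\leftarrow\widetilde{X}$; $(K_v,\underline{V},\Delta V,V_c)\leftarrow\textsc{CPred}(\{[f_u]\},V,X,\varepsilon)$; $\widetilde{X}\leftarrow Z\cup\underline{V}$; $V\leftarrow\underline{V}$; $G_2\leftarrow G_2\cup\Delta V\cup V_c$}; $K\leftarrow K\cup K_v$; $\widetilde{Y}\leftarrow X$; $G_1\leftarrow\Delta Z\cup Z_c$. Return $K$. The interval part of $K$ is the union of all boxes $[x]$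 occurring in pairs $([x],u)\in K$. *)

theory Defs
  imports "HOL-Analysis.Analysis"
begin

text \<open>A box in R^n is represented by its lower and upper corner.\<close>
type_synonym 'n box = "(real^'n) \<times> (real^'n)"

definition box_set :: "'n::finite box \<Rightarrow> (real^'n) set" where
  "box_set B = {x. \<forall>i. fst B $ i \<le> x $ i \<and> x $ i \<le> snd B $ i}"

definition valid_box :: "'n::finite box \<Rightarrow> bool" where
  "valid_box B \<longleftrightarrow> (\<forall>i. fst B $ i \<le> snd B $ i)"

definition wid :: "'n::finite box \<Rightarrow> real" where
  "wid B = Max (range (\<lambda>i. snd B $ i - fst B $ i))"

definition boxes_set :: "'n::finite box list \<Rightarrow> (real^'n) set" where
  "boxes_set L = \<Union> (box_set ` set L)"

definition is_inclusion_fun ::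
  "(real^'n::finite) set \<Rightarrow> (real^'n \<Rightarrow> real^'n) \<Rightarrow> ('n box \<Rightarrow> 'n box) \<Rightarrow> bool" where
  "is_inclusion_fun D f F \<longleftrightarrow>
     (\<forall>B. valid_box B \<and> box_set B \<subseteq> D \<longrightarrow> valid_box (F B) \<and> f ` box_set B \<subseteq> box_set (F B)) \<and>
     (\<forall>Bs. (\<forall>k. valid_box (Bs k) \<and> box_set (Bs k) \<subseteq> D) \<and> (\<lambda>k. wid (Bs k)) \<longlonglongrightarrow> 0
            \<longrightarrow> (\<lambda>k. wid (F (Bs k))) \<longlonglongrightarrow> 0)"

definition split_coord :: "'n::finite box \<Rightarrow> 'n" where
  "split_coord B = (SOME i. \<forall>j. snd B $ j - fst B $ j \<le> snd B $ i - fst B $ i)"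

definition bisect :: "'n::finite box \<Rightarrow> 'n box \<times> 'n box" where
  "bisect B = (let i = split_coord B; m = (fst B $ i + snd B $ i) / 2 in
     ((fst B, \<chi> j. if j = i then m else snd B $ j),
      (\<chi> j. if j = i then m else fst B $ j, snd B)))"

partial_function (option) cpred_loop ::
  "'u set \<Rightarrow> ('u \<Rightarrow> 'n::finite box \<Rightarrow> 'n box) \<Rightarrow> (real^'n) set \<Rightarrow> real \<Rightarrow> 'n box list \<Rightarrow>
   (('n box \<times> 'u) list \<times> 'n box list \<times> 'n box list \<times> 'n box list) \<Rightarrow>
   (('n box \<times> 'u) list \<times> 'n box list \<times> 'n box list \<times> 'n box list) option"
where
  "cpred_loop U F Y eps L acc =
    (case L of
       [] \<Rightarrow> Some acc
     | B # L' \<Rightarrow>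
        (case acc of (K, Xu, DX, Xc) \<Rightarrow>
          if (\<forall>u\<in>U. box_set (F u B) \<inter> Y = {}) then
            cpred_loop U F Y eps L' (K, Xu, DX, Xc @ [B])
          else if (\<exists>u\<in>U. box_set (F u B) \<subseteq> Y) then
            cpred_loop U F Y eps L'
              (K @ [(B, SOME u. u \<in> U \<and> box_set (F u B) \<subseteq> Y)], Xu @ [B], DX, Xc)
          else if wid B < eps then
            cpred_loop U F Y eps L' (K, Xu, DX @ [B], Xc)
          else
            cpred_loop U F Y eps (fst (bisect B) # snd (bisect B) # L') acc))"

text \<open>CPred({[f_u]}, X, Y, eps) returns (K, X_under, Delta X, X_c).\<close>
definition cpred ::
  "'u set \<Rightarrow> ('u \<Rightarrow> 'n::finite box \<Rightarrow> 'n box) \<Rightarrow> 'n box list \<Rightarrow> (real^'n) set \<Rightarrow> real \<Rightarrow>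
   (('n box \<times> 'u) list \<times> 'n box list \<times> 'n box list \<times> 'n box list) option" where
  "cpred U F X Y eps = cpred_loop U F Y eps X ([], [], [], [])"

text \<open>Inner loop; state: Z, X (set), X-tilde, V, G2, K_v. Returns (X, G2, K_v).\<close>
partial_function (option) alg3_inner ::
  "'u set \<Rightarrow> ('u \<Rightarrow> 'n::finite box \<Rightarrow> 'n box) \<Rightarrow> real \<Rightarrow> 'n box list \<Rightarrow> (real^'n) set \<Rightarrow>
   'n box list \<Rightarrow> 'n box list \<Rightarrow> 'n box list \<Rightarrow> ('n box \<times> 'u) list \<Rightarrow>
   ('n box list \<times> 'n box list \<times> ('n box \<times> 'u) list) option"
where
  "alg3_inner U F eps Z X Xt V G2 Kv =
    (if boxes_set Xt = X then Some (Xt, G2, Kv)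
     else Option.bind (cpred U F V (boxes_set Xt) eps)
       (\<lambda>r. case r of (Kv', Vu, DV, Vc) \<Rightarrow>
          alg3_inner U F eps Z (boxes_set Xt) (Z @ Vu) Vu (G2 @ DV @ Vc) Kv'))"

text \<open>Outer loop; state: Y (set), Y-tilde, G1, G2, K.\<close>
partial_function (option) alg3_outer ::
  "'u set \<Rightarrow> ('u \<Rightarrow> 'n::finite box \<Rightarrow> 'n box) \<Rightarrow> real \<Rightarrow> (real^'n) set \<Rightarrow> 'n box list \<Rightarrow>
   'n box list \<Rightarrow> 'n box list \<Rightarrow> ('n box \<times> 'u) list \<Rightarrow> ('n box \<times> 'u) list option"
where
  "alg3_outer U F eps Y Yt G1 G2 K =
    (if boxes_set Yt = Y then Some K
     else Option.bind (cpred U F G1 (boxes_set Yt) eps)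
       (\<lambda>r. case r of (Kz, Zu, DZ, Zc) \<Rightarrow>
          Option.bind (alg3_inner U F eps (Yt @ Zu) {} ((Yt @ Zu) @ G2) G2 [] [])
            (\<lambda>s. case s of (X, G2', Kv) \<Rightarrow>
               alg3_outer U F eps (boxes_set Yt) X (DZ @ Zc) G2' (K @ Kz @ Kv))))"

text \<open>Algorithm 3: G1 and G2 are the box-list representations of X \ Omega and X \<inter> Omega;
  Y is initialised to the state space XX and Y-tilde to the empty list.
  Result None = non-termination.\<close>
definition algorithm3 ::
  "'u set \<Rightarrow> ('u \<Rightarrow> 'n::finite box \<Rightarrow> 'n box) \<Rightarrow> real \<Rightarrow> (real^'n) set \<Rightarrow> 'n box list \<Rightarrow> 'n box list \<Rightarrow>
   ('n box \<times> 'u) list option" where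
  "algorithm3 U F eps XX G1 G2 = alg3_outer U F eps XX [] G1 G2 []"

definition interval_part :: "('n::finite box \<times> 'u) list \<Rightarrow> (real^'n) set" where
  "interval_part K = \<Union> ((\<lambda>p. box_set (fst p)) ` set K)"

text \<open>A length-k prefix of a solution of Sigma^delta from x0 conforming to kappa
  (x_{j+1} = f_u(x_j) + d_j with u in kappa(x_j), infnorm d_j <= delta).\<close>
definition prefix_run ::
  "real \<Rightarrow> ('u \<Rightarrow> real^'n::finite \<Rightarrow> real^'n) \<Rightarrow> (real^'n \<Rightarrow> 'u set) \<Rightarrow> real^'n \<Rightarrow>
   (nat \<Rightarrow> real^'n) \<Rightarrow> nat \<Rightarrow> bool" where
  "prefix_run \<delta> f \<kappa> x0 xs k \<longleftrightarrow> xs 0 = x0 \<and>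
     (\<forall>j<k. \<exists>u\<in>\<kappa> (xs j). infnorm (xs (Suc j) - f u (xs j)) \<le> \<delta>)"

definition winning_strategy ::
  "real \<Rightarrow> 'u set \<Rightarrow> ('u \<Rightarrow> real^'n::finite \<Rightarrow> real^'n) \<Rightarrow> (real^'n) set \<Rightarrow> (real^'n) set \<Rightarrow>
   (real^'n \<Rightarrow> 'u set) \<Rightarrow> real^'n \<Rightarrow> bool" where
  "winning_strategy \<delta> U f XX \<Omega> \<kappa> x0 \<longleftrightarrow>
     (\<forall>x. \<kappa> x \<subseteq> U) \<and>
     (\<forall>xs k. prefix_run \<delta> f \<kappa> x0 xs k \<longrightarrow> xs k \<in> XX \<and> \<kappa> (xs k) \<noteq> {}) \<and>
     (\<forall>xs. (\<forall>k. prefix_run \<delta> f \<kappa> x0 xs k) \<longrightarrow> (\<exists>N. \<forall>k\<ge>N. xs k \<in> \<Omega>))"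

definition Win ::
  "real \<Rightarrow> 'u set \<Rightarrow> ('u \<Rightarrow> real^'n::finite \<Rightarrow> real^'n) \<Rightarrow> (real^'n) set \<Rightarrow> (real^'n) set \<Rightarrow>
   (real^'n) set" where
  "Win \<delta> U f XX \<Omega> = {x0 \<in> XX. \<exists>\<kappa>. winning_strategy \<delta> U f XX \<Omega> \<kappa> x0}"

end

theory Submission
  imports Defs
begin

text \<open>
  Termination: every box the algorithm handles arises from the initial boxes by bisecting boxes
  of width at least \<open>\<epsilon>\<close>, so only finitely many boxes occur; each round of the inner loop
  shrinks, and each round of the outer loop enlarges, a union of such boxes.

  Soundness: the controller \<open>K\<close> grows in blocks whose entries either lead into earlier blocks
  or lie in \<open>\<Omega>\<close>. Ranking a point by the first block containing it gives a memoryless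
  strategy along which the rank never increases and strictly decreases outside \<open>\<Omega>\<close>.

  Completeness: every point that is discarded, or never accepted, lies in a box rejected by
  CPred: either all its image boxes miss the target, or the box has width below \<open>\<epsilon>\<close>, so
  its image boxes have width at most \<open>\<rho> \<epsilon> \<le> \<delta>\<close> and a disturbance of size
  \<open>\<delta>\<close> leaves the target. Ranking the discarded points by the time of their removal, the
  disturbance forces every run starting outside the computed set to leave \<open>\<Omega>\<close> infinitely
  often.
\<close>

definition side :: "'n::finite box \<Rightarrow> 'n \<Rightarrow> real" where
  "side B i = snd B $ i - fst B $ i"

lemma wid_Max_side: "wid B = Max (range (side B))"
  unfolding wid_def side_def[abs_def] ..

lemma side_le_wid: "side B i \<le> wid B"
  unfolding wid_Max_side by (rule Max_ge) auto

lemma side_split_coord: "side B (split_coord B) = wid B"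
proof -
  have "wid B \<in> range (side B)"
    unfolding wid_Max_side by (rule Max_in) auto
  then obtain i where "\<forall>j. side B j \<le> side B i"
    using side_le_wid by (metis rangeE)
  then have "\<exists>i. \<forall>j. snd B $ j - fst B $ j \<le> snd B $ i - fst B $ i"
    unfolding side_def by blast
  then have "\<forall>j. side B j \<le> side B (split_coord B)"
    unfolding split_coord_def side_def by (rule someI_ex)
  then have "Max (range (side B)) = side B (split_coord B)"
    by (intro Max_eqI) auto
  then show ?thesis
    unfolding wid_Max_side ..
qed

lemma side_bisect:
  "side (fst (bisect B)) j = (if j = split_coord B then side B j / 2 else side B j)"
  "side (snd (bisect B)) j = (if j = split_coord B then side B j / 2 else side B j)"
  unfolding bisect_def side_def Let_def by (simp_all add: field_simps)

lemma valid_box_bisect: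
  assumes "valid_box B"
  shows "valid_box (fst (bisect B))" "valid_box (snd (bisect B))"
  using assms unfolding bisect_def valid_box_def Let_def by auto

lemma box_set_bisect:
  assumes "valid_box B"
  shows "box_set B = box_set (fst (bisect B)) \<union> box_set (snd (bisect B))"
proof (intro equalityI subsetI)
  fix x assume x: "x \<in> box_set B"
  show "x \<in> box_set (fst (bisect B)) \<union> box_set (snd (bisect B))"
  proof (cases "x $ split_coord B \<le> (fst B $ split_coord B + snd B $ split_coord B) / 2")
    case True
    then have "x \<in> box_set (fst (bisect B))"
      using x unfolding bisect_def box_set_def Let_def by auto
    then show ?thesis ..
  next
    case False
    then have "x \<in> box_set (snd (bisect B))"
      using x unfolding bisect_def box_set_def Let_def by auto
    then show ?thesis ..
  qed
next
  fix x assume "x \<in> box_set (fst (bisect B)) \<union> box_set (snd (bisect B))"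
  then show "x \<in> box_set B"
    using assms unfolding bisect_def box_set_def valid_box_def Let_def
    by (auto split: if_splits) (smt (verit))+
qed

lemma fst_in_box_set: "valid_box B \<Longrightarrow> fst B \<in> box_set B"
  unfolding valid_box_def box_set_def by auto

lemma infnorm_diff_le_wid:
  assumes "y \<in> box_set B" "z \<in> box_set B"
  shows "infnorm (y - z) \<le> wid B"
  unfolding infnorm_cart
proof (rule cSup_least)
  show "{\<bar>(y - z) $ i\<bar> |i. i \<in> UNIV} \<noteq> {}" by blast
  have "\<bar>(y - z) $ i\<bar> \<le> wid B" for i
  proof -
    have "fst B $ i \<le> y $ i" "y $ i \<le> snd B $ i" "fst B $ i \<le> z $ i" "z $ i \<le> snd B $ i"
      using assms unfolding box_set_def by auto
    then have "\<bar>(y - z) $ i\<bar> \<le> side B i" unfolding side_def by simp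
    then show ?thesis using side_le_wid[of B i] by linarith
  qed
  then show "\<And>r. r \<in> {\<bar>(y - z) $ i\<bar> |i. i \<in> UNIV} \<Longrightarrow> r \<le> wid B" by blast
qed

lemma box_set_subset_boxes_set: "B \<in> set L \<Longrightarrow> box_set B \<subseteq> boxes_set L"
  unfolding boxes_set_def by blast

lemma boxes_set_simps [simp]:
  "boxes_set [] = {}" "boxes_set (B # L) = box_set B \<union> boxes_set L"
  "boxes_set (L1 @ L2) = boxes_set L1 \<union> boxes_set L2"
  unfolding boxes_set_def by auto

lemma interval_part_Nil [simp]: "interval_part [] = {}"
  and interval_part_append [simp]: "interval_part (K @ K') = interval_part K \<union> interval_part K'"
  unfolding interval_part_def by auto

lemma interval_part_eq_boxes_set: "interval_part K = boxes_set (map fst K)"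
  unfolding interval_part_def boxes_set_def by auto

section \<open>Termination of bisection\<close>

definition halvings :: "real \<Rightarrow> real \<Rightarrow> nat" where
  "halvings eps s = (LEAST n. s < eps * 2 ^ n)"

lemma halvings_half:
  assumes "eps > 0" and "eps \<le> s"
  shows "halvings eps (s / 2) < halvings eps s"
proof -
  have "\<exists>n. s < eps * 2 ^ n"
    using real_arch_pow[of 2 "s / eps"] \<open>eps > 0\<close> by (auto simp: pos_divide_less_eq mult.commute)
  then have less: "s < eps * 2 ^ halvings eps s"
    unfolding halvings_def by (rule LeastI_ex)
  then obtain m where m: "halvings eps s = Suc m"
    using \<open>eps \<le> s\<close> by (cases "halvings eps s") auto
  have "halvings eps (s / 2) \<le> m"
    unfolding halvings_def by (rule Least_le) (use less m in auto)
  then show ?thesis using m by simp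
qed

definition bisection_depth :: "real \<Rightarrow> 'n::finite box \<Rightarrow> nat" where
  "bisection_depth eps B = (\<Sum>i\<in>UNIV. halvings eps (side B i))"

lemma bisection_depth_bisect:
  assumes "eps > 0" and "\<not> wid B < eps"
  shows "bisection_depth eps (fst (bisect B)) < bisection_depth eps B"
    and "bisection_depth eps (snd (bisect B)) < bisection_depth eps B"
proof -
  have "halvings eps (side B (split_coord B) / 2) < halvings eps (side B (split_coord B))"
    using assms by (intro halvings_half) (auto simp: side_split_coord)
  then show "bisection_depth eps (fst (bisect B)) < bisection_depth eps B"
    and "bisection_depth eps (snd (bisect B)) < bisection_depth eps B"
    unfolding bisection_depth_def by (auto intro!: sum_strict_mono_ex1 simp: side_bisect)
qed

text \<open>Replacing a box by its two halves decreases this measure, since both halves have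
  strictly smaller depth and \<open>3 ^ k + 3 ^ k < 3 ^ Suc k\<close>.\<close>
definition worklist_measure :: "real \<Rightarrow> 'n::finite box list \<Rightarrow> nat" where
  "worklist_measure eps L = (\<Sum>B\<leftarrow>L. 3 ^ bisection_depth eps B)"

lemma worklist_measure_bisect:
  assumes "eps > 0" and "\<not> wid B < eps"
  shows "worklist_measure eps (fst (bisect B) # snd (bisect B) # L) < worklist_measure eps (B # L)"
proof -
  note less = bisection_depth_bisect[OF assms]
  then obtain k where k: "bisection_depth eps B = Suc k" by (cases "bisection_depth eps B") auto
  have "(3::nat) ^ bisection_depth eps (fst (bisect B)) \<le> 3 ^ k"
    and "(3::nat) ^ bisection_depth eps (snd (bisect B)) \<le> 3 ^ k"
    using less k by (auto intro: power_increasing)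
  moreover have "(3::nat) ^ bisection_depth eps B = 3 * 3 ^ k" "(0::nat) < 3 ^ k" using k by simp_all
  ultimately have "(3::nat) ^ bisection_depth eps (fst (bisect B)) + 3 ^ bisection_depth eps (snd (bisect B))
      < 3 ^ bisection_depth eps B" by linarith
  then show ?thesis unfolding worklist_measure_def by simp
qed

section \<open>Specification of CPred\<close>

definition cpred_output ::
  "'u set \<Rightarrow> ('u \<Rightarrow> 'n::finite box \<Rightarrow> 'n box) \<Rightarrow> (real^'n) set \<Rightarrow> real \<Rightarrow> ('n box \<Rightarrow> bool) \<Rightarrow>
   'n box list \<Rightarrow> ('n box \<times> 'u) list \<Rightarrow> 'n box list \<Rightarrow> 'n box list \<Rightarrow> 'n box list \<Rightarrow> bool" where
  "cpred_output U F Y eps P L K Xu DX Xc \<longleftrightarrow>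
     map fst K = Xu \<and>
     (\<forall>p\<in>set K. snd p \<in> U \<and> box_set (F (snd p) (fst p)) \<subseteq> Y) \<and>
     (\<forall>B\<in>set Xc. \<forall>u\<in>U. box_set (F u B) \<inter> Y = {}) \<and>
     (\<forall>B\<in>set DX. wid B < eps \<and> (\<forall>u\<in>U. \<not> box_set (F u B) \<subseteq> Y)) \<and>
     boxes_set L = boxes_set Xu \<union> boxes_set DX \<union> boxes_set Xc \<and>
     (\<forall>B\<in>set Xu \<union> set DX \<union> set Xc. P B)"

lemma cpred_loop_output:
  fixes P :: "'n::finite box \<Rightarrow> bool"
  assumes "eps > 0"
    and valid: "\<And>B. P B \<Longrightarrow> valid_box B"
    and bisect_closed: "\<And>B. P B \<Longrightarrow> \<not> wid B < eps \<Longrightarrow> P (fst (bisect B)) \<and> P (snd (bisect B))"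
  shows "\<forall>B\<in>set L. P B \<Longrightarrow> \<exists>K' Xu' DX' Xc'.
     cpred_loop U F Y eps L (K, Xu, DX, Xc) = Some (K @ K', Xu @ Xu', DX @ DX', Xc @ Xc') \<and>
     cpred_output U F Y eps P L K' Xu' DX' Xc'"
proof (induction L arbitrary: K Xu DX Xc rule: measure_induct_rule[where f = "worklist_measure eps"])
  case (less L)
  show ?case
  proof (cases L)
    case Nil
    then show ?thesis by (subst cpred_loop.simps) (auto simp: cpred_output_def)
  next
    case (Cons B L')
    have PB: "P B" and PL': "\<forall>B\<in>set L'. P B" using less.prems Cons by auto
    have shorter: "worklist_measure eps L' < worklist_measure eps L"
      unfolding Cons worklist_measure_def by simp
    note IH = less.IH[OF shorter PL']
    consider (miss) "\<forall>u\<in>U. box_set (F u B) \<inter> Y = {}"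
      | (hit) "\<not> (\<forall>u\<in>U. box_set (F u B) \<inter> Y = {})" "\<exists>u\<in>U. box_set (F u B) \<subseteq> Y"
      | (small) "\<not> (\<forall>u\<in>U. box_set (F u B) \<inter> Y = {})" "\<not> (\<exists>u\<in>U. box_set (F u B) \<subseteq> Y)"
          "wid B < eps"
      | (bisect) "\<not> (\<forall>u\<in>U. box_set (F u B) \<inter> Y = {})" "\<not> (\<exists>u\<in>U. box_set (F u B) \<subseteq> Y)"
          "\<not> wid B < eps"
      by argo
    then show ?thesis
    proof cases
      case miss
      from IH[of K Xu DX "Xc @ [B]"] obtain K' Xu' DX' Xc' where
        run: "cpred_loop U F Y eps L' (K, Xu, DX, Xc @ [B]) =
          Some (K @ K', Xu @ Xu', DX @ DX', (Xc @ [B]) @ Xc')"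
        and out: "cpred_output U F Y eps P L' K' Xu' DX' Xc'" by blast
      have "cpred_loop U F Y eps L (K, Xu, DX, Xc) = Some (K @ K', Xu @ Xu', DX @ DX', Xc @ B # Xc')"
        by (subst cpred_loop.simps) (simp add: Cons miss run)
      moreover have "cpred_output U F Y eps P L K' Xu' DX' (B # Xc')"
        using out miss PB unfolding cpred_output_def Cons by auto
      ultimately show ?thesis by blast
    next
      case hit
      define u where "u = (SOME u. u \<in> U \<and> box_set (F u B) \<subseteq> Y)"
      have u: "u \<in> U \<and> box_set (F u B) \<subseteq> Y"
        using hit(2) unfolding u_def by (metis (mono_tags, lifting) someI_ex)
      from IH[of "K @ [(B, u)]" "Xu @ [B]" DX Xc] obtain K' Xu' DX' Xc' where
        run: "cpred_loop U F Y eps L' (K @ [(B, u)], Xu @ [B], DX, Xc) =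
          Some ((K @ [(B, u)]) @ K', (Xu @ [B]) @ Xu', DX @ DX', Xc @ Xc')"
        and out: "cpred_output U F Y eps P L' K' Xu' DX' Xc'" by blast
      have "cpred_loop U F Y eps L (K, Xu, DX, Xc) =
          Some (K @ (B, u) # K', Xu @ B # Xu', DX @ DX', Xc @ Xc')"
        using run by (subst cpred_loop.simps) (simp add: Cons hit u_def)
      moreover have "cpred_output U F Y eps P L ((B, u) # K') (B # Xu') DX' Xc'"
        using out u PB unfolding cpred_output_def Cons by auto
      ultimately show ?thesis by blast
    next
      case small
      from IH[of K Xu "DX @ [B]" Xc] obtain K' Xu' DX' Xc' where
        run: "cpred_loop U F Y eps L' (K, Xu, DX @ [B], Xc) =
          Some (K @ K', Xu @ Xu', (DX @ [B]) @ DX', Xc @ Xc')"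
        and out: "cpred_output U F Y eps P L' K' Xu' DX' Xc'" by blast
      have "cpred_loop U F Y eps L (K, Xu, DX, Xc) = Some (K @ K', Xu @ Xu', DX @ B # DX', Xc @ Xc')"
        by (subst cpred_loop.simps) (simp add: Cons small run)
      moreover have "cpred_output U F Y eps P L K' Xu' (B # DX') Xc'"
        using out small PB unfolding cpred_output_def Cons by auto
      ultimately show ?thesis by blast
    next
      case bisect
      let ?L = "fst (bisect B) # snd (bisect B) # L'"
      have "worklist_measure eps ?L < worklist_measure eps L"
        unfolding Cons using worklist_measure_bisect[OF \<open>eps > 0\<close> bisect(3)] .
      moreover have "\<forall>B\<in>set ?L. P B" using bisect_closed[OF PB bisect(3)] PL' by auto
      ultimately obtain K' Xu' DX' Xc' where
        run: "cpred_loop U F Y eps ?L (K, Xu, DX, Xc) = Some (K @ K', Xu @ Xu', DX @ DX', Xc @ Xc')"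
        and out: "cpred_output U F Y eps P ?L K' Xu' DX' Xc'" using less.IH by blast
      have "cpred_loop U F Y eps L (K, Xu, DX, Xc) = Some (K @ K', Xu @ Xu', DX @ DX', Xc @ Xc')"
        by (subst cpred_loop.simps) (simp add: Cons bisect run)
      moreover have "cpred_output U F Y eps P L K' Xu' DX' Xc'"
        using out box_set_bisect[OF valid[OF PB]] unfolding cpred_output_def Cons by auto
      ultimately show ?thesis by blast
    qed
  qed
qed

lemma cpred_output:
  fixes P :: "'n::finite box \<Rightarrow> bool"
  assumes "eps > 0"
    and "\<And>B. P B \<Longrightarrow> valid_box B"
    and "\<And>B. P B \<Longrightarrow> \<not> wid B < eps \<Longrightarrow> P (fst (bisect B)) \<and> P (snd (bisect B))"
    and "\<forall>B\<in>set L. P B"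
  shows "\<exists>K Xu DX Xc. cpred U F L Y eps = Some (K, Xu, DX, Xc) \<and> cpred_output U F Y eps P L K Xu DX Xc"
  using cpred_loop_output[OF assms, of U F Y "[]" "[]" "[]" "[]"] unfolding cpred_def by auto

definition bisect_child :: "real \<Rightarrow> ('n::finite box \<times> 'n box) set" where
  "bisect_child eps = {(B, C). \<not> wid B < eps \<and> (C = fst (bisect B) \<or> C = snd (bisect B))}"

lemma bisect_descendant_cases:
  assumes "C \<in> (bisect_child eps)\<^sup>* `` {B}"
  shows "C = B \<or> \<not> wid B < eps \<and> (C \<in> (bisect_child eps)\<^sup>* `` {fst (bisect B)} \<or>
                                     C \<in> (bisect_child eps)\<^sup>* `` {snd (bisect B)})"
proof -
  have "(B, C) \<in> (bisect_child eps)\<^sup>*" using assms by simp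
  then show ?thesis
  proof (cases rule: converse_rtranclE)
    case (step D)
    then show ?thesis unfolding bisect_child_def by auto
  qed simp
qed

lemma finite_bisect_descendants:
  assumes "eps > 0"
  shows "finite ((bisect_child eps)\<^sup>* `` {B})"
proof (induction "bisection_depth eps B" arbitrary: B rule: less_induct)
  case less
  show ?case
  proof (cases "wid B < eps")
    case True
    then have "(bisect_child eps)\<^sup>* `` {B} \<subseteq> {B}"
      using bisect_descendant_cases[of _ eps B] by blast
    then show ?thesis by (rule finite_subset) simp
  next
    case False
    have "finite ((bisect_child eps)\<^sup>* `` {fst (bisect B)})"
      and "finite ((bisect_child eps)\<^sup>* `` {snd (bisect B)})"
      using less bisection_depth_bisect[OF assms False] by blast+
    moreover have "(bisect_child eps)\<^sup>* `` {B} \<subseteq> insert B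
        ((bisect_child eps)\<^sup>* `` {fst (bisect B)} \<union> (bisect_child eps)\<^sup>* `` {snd (bisect B)})"
      using bisect_descendant_cases[of _ eps B] by blast
    ultimately show ?thesis by (simp add: finite_subset)
  qed
qed

lemma finite_bisect_reachable:
  "eps > 0 \<Longrightarrow> finite S \<Longrightarrow> finite ((bisect_child eps)\<^sup>* `` S)"
  unfolding Image_eq_UN[of _ S] using finite_bisect_descendants by auto

lemma bisect_reachable_closed:
  assumes "B \<in> (bisect_child eps)\<^sup>* `` S" and "\<not> wid B < eps"
  shows "fst (bisect B) \<in> (bisect_child eps)\<^sup>* `` S \<and> snd (bisect B) \<in> (bisect_child eps)\<^sup>* `` S"
proof -
  obtain A where "A \<in> S" and "(A, B) \<in> (bisect_child eps)\<^sup>*" using assms(1) by blast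
  moreover have "(B, fst (bisect B)) \<in> bisect_child eps" "(B, snd (bisect B)) \<in> bisect_child eps"
    using assms(2) unfolding bisect_child_def by auto
  ultimately show ?thesis by (meson ImageI rtrancl_into_rtrancl)
qed

lemma valid_box_bisect_reachable:
  assumes "B \<in> (bisect_child eps)\<^sup>* `` S" and "\<forall>B\<in>S. valid_box B"
  shows "valid_box B"
proof -
  obtain A where "A \<in> S" and AB: "(A, B) \<in> (bisect_child eps)\<^sup>*" using assms(1) by blast
  from AB show ?thesis
  proof (induction rule: rtrancl_induct)
    case (step C D)
    then show ?case unfolding bisect_child_def using valid_box_bisect[of C] by auto
  qed (use \<open>A \<in> S\<close> assms(2) in blast)
qed

section \<open>Soundness: certified controllers are winning\<close>

definition ranking_strategy ::
  "'u set \<Rightarrow> ('u \<Rightarrow> 'a \<Rightarrow> 'a) \<Rightarrow> 'a set \<Rightarrow> 'a set \<Rightarrow> ('a \<Rightarrow> 'u set) \<Rightarrow> ('a \<Rightarrow> nat) \<Rightarrow> bool" where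
  "ranking_strategy U f W \<Omega> \<kappa> r \<longleftrightarrow> (\<forall>x. \<kappa> x \<subseteq> U) \<and>
     (\<forall>x\<in>W. \<kappa> x \<noteq> {} \<and> (\<forall>u\<in>\<kappa> x. f u x \<in> W \<and> r (f u x) \<le> r x \<and> (x \<notin> \<Omega> \<longrightarrow> r (f u x) < r x)))"

lemma prefix_run_0_Suc:
  "prefix_run 0 f \<kappa> x0 xs (Suc k) \<longleftrightarrow> prefix_run 0 f \<kappa> x0 xs k \<and> (\<exists>u\<in>\<kappa> (xs k). xs (Suc k) = f u (xs k))"
proof -
  have "infnorm (y - z) \<le> 0 \<longleftrightarrow> y = z" for y z :: "real^'n"
    using infnorm_pos_le[of "y - z"] by (simp add: infnorm_eq_0 antisym_conv)
  then show ?thesis unfolding prefix_run_def by (auto simp: less_Suc_eq)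
qed

lemma ranking_strategy_run:
  assumes "ranking_strategy U f W \<Omega> \<kappa> r" and "x0 \<in> W" and "prefix_run 0 f \<kappa> x0 xs k"
  shows "xs k \<in> W"
  using assms(3)
proof (induction k)
  case 0
  then show ?case using \<open>x0 \<in> W\<close> by (simp add: prefix_run_def)
next
  case (Suc k)
  then show ?case using assms(1) by (auto simp: prefix_run_0_Suc ranking_strategy_def)
qed

lemma ranking_strategy_eventually_in:
  assumes "ranking_strategy U f W \<Omega> \<kappa> r" and "x0 \<in> W" and run: "\<forall>k. prefix_run 0 f \<kappa> x0 xs k"
  shows "\<exists>N. \<forall>k\<ge>N. xs k \<in> \<Omega>"
proof -
  have step: "r (xs (Suc k)) \<le> r (xs k) \<and> (xs k \<notin> \<Omega> \<longrightarrow> r (xs (Suc k)) < r (xs k))" for k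
  proof -
    obtain u where "u \<in> \<kappa> (xs k)" "xs (Suc k) = f u (xs k)"
      using run[rule_format, of "Suc k"] unfolding prefix_run_0_Suc by blast
    moreover have "xs k \<in> W" using ranking_strategy_run[OF assms(1,2)] run by blast
    ultimately show ?thesis using assms(1) unfolding ranking_strategy_def by auto
  qed
  have "\<exists>N. \<forall>k\<ge>N. xs k \<in> \<Omega>" if "r (xs j) \<le> n" for n j
    using that
  proof (induction n arbitrary: j rule: less_induct)
    case (less n)
    show ?case
    proof (cases "\<forall>k\<ge>j. xs k \<in> \<Omega>")
      case False
      then obtain k where "k \<ge> j" "xs k \<notin> \<Omega>" by blast
      moreover have "r (xs k) \<le> r (xs j)"
        using lift_Suc_antimono_le[of "\<lambda>k. r (xs k)"] step \<open>k \<ge> j\<close> by blast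
      ultimately have "r (xs (Suc k)) < n" using step[of k] less.prems by linarith
      then show ?thesis using less.IH by blast
    qed blast
  qed
  then show ?thesis by blast
qed

lemma ranking_strategy_subset_Win:
  assumes "ranking_strategy U f W \<Omega> \<kappa> r" and "W \<subseteq> XX"
  shows "W \<subseteq> Win 0 U f XX \<Omega>"
proof
  fix x0 assume "x0 \<in> W"
  have "winning_strategy 0 U f XX \<Omega> \<kappa> x0"
    unfolding winning_strategy_def
    using ranking_strategy_run[OF assms(1) \<open>x0 \<in> W\<close>] ranking_strategy_eventually_in[OF assms(1) \<open>x0 \<in> W\<close>]
      assms unfolding ranking_strategy_def by blast
  then show "x0 \<in> Win 0 U f XX \<Omega>" unfolding Win_def using \<open>x0 \<in> W\<close> assms(2) by blast
qed

text \<open>This mirrors the update \<open>K \<leftarrow> K \<union> K\<^sub>z \<union> K\<^sub>v\<close> of Algorithm 3: the entries of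
  \<open>K\<^sub>z\<close> lead into the old interval part, those of \<open>K\<^sub>v\<close> lie in \<open>\<Omega>\<close> and lead
  into the new one.\<close>
inductive certified_controller ::
  "'u set \<Rightarrow> ('u \<Rightarrow> 'n::finite box \<Rightarrow> 'n box) \<Rightarrow> (real^'n) set \<Rightarrow> (real^'n) set \<Rightarrow>
   ('n box \<times> 'u) list \<Rightarrow> bool"
  for U F XX \<Omega> where
  Nil: "certified_controller U F XX \<Omega> []"
| append: "certified_controller U F XX \<Omega> K \<Longrightarrow>
    \<forall>(B, u)\<in>set K'. u \<in> U \<and> valid_box B \<and> box_set B \<subseteq> XX \<and>
      (box_set (F u B) \<subseteq> interval_part K \<or>
       box_set B \<subseteq> \<Omega> \<and> box_set (F u B) \<subseteq> interval_part (K @ K')) \<Longrightarrow>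
    certified_controller U F XX \<Omega> (K @ K')"

lemma certified_controller_subset:
  "certified_controller U F XX \<Omega> K \<Longrightarrow> interval_part K \<subseteq> XX"
  by (induction rule: certified_controller.induct) (auto simp: interval_part_def case_prod_beta)

text \<open>The rank of a point is the index of the first block whose boxes contain it.\<close>
lemma certified_controller_ranking:
  assumes "certified_controller U F XX \<Omega> K" and incl: "\<forall>u\<in>U. is_inclusion_fun XX (f u) (F u)"
  shows "\<exists>\<kappa> r N. ranking_strategy U f (interval_part K) \<Omega> \<kappa> r \<and> (\<forall>x\<in>interval_part K. r x \<le> N)"
  using assms(1)
proof (induction rule: certified_controller.induct)
  case Nil
  show ?case by (rule exI[of _ "\<lambda>_. {}"]) (simp add: ranking_strategy_def interval_part_def)
next
  case (append K K')
  obtain \<kappa> r N where rk: "ranking_strategy U f (interval_part K) \<Omega> \<kappa> r"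
    and bound: "\<forall>x\<in>interval_part K. r x \<le> N" using append.IH by blast
  define \<kappa>' where "\<kappa>' x = (if x \<in> interval_part K then \<kappa> x
    else {u. \<exists>B. (B, u) \<in> set K' \<and> x \<in> box_set B})" for x
  define r' where "r' x = (if x \<in> interval_part K then r x else Suc N)" for x
  have new: "f u x \<in> interval_part (K @ K') \<and> r' (f u x) \<le> r' x \<and> (x \<notin> \<Omega> \<longrightarrow> r' (f u x) < r' x)"
    if "(B, u) \<in> set K'" "x \<in> box_set B" "x \<notin> interval_part K" for B u x
  proof -
    have "u \<in> U \<and> valid_box B \<and> box_set B \<subseteq> XX \<and>
        (box_set (F u B) \<subseteq> interval_part K \<or>
         box_set B \<subseteq> \<Omega> \<and> box_set (F u B) \<subseteq> interval_part (K @ K'))"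
      using append.hyps(2) that(1) by fast
    then have "f u x \<in> interval_part K \<or> x \<in> \<Omega> \<and> f u x \<in> interval_part (K @ K')"
      using incl that(2) unfolding is_inclusion_fun_def by blast
    then show ?thesis using bound that(3) unfolding r'_def by auto
  qed
  have "\<kappa>' x \<subseteq> U" for x
    using rk append.hyps(2) unfolding \<kappa>'_def ranking_strategy_def by auto
  moreover have "\<kappa>' x \<noteq> {}" if x: "x \<in> interval_part (K @ K')" for x
  proof (cases "x \<in> interval_part K")
    case False
    then obtain B u where "(B, u) \<in> set K'" "x \<in> box_set B"
      using x unfolding interval_part_def by auto
    then have "u \<in> \<kappa>' x" unfolding \<kappa>'_def if_not_P[OF False] by blast
    then show ?thesis by blast
  qed (use rk in \<open>auto simp: \<kappa>'_def ranking_strategy_def\<close>)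
  moreover have "f u x \<in> interval_part (K @ K') \<and> r' (f u x) \<le> r' x \<and> (x \<notin> \<Omega> \<longrightarrow> r' (f u x) < r' x)"
    if "x \<in> interval_part (K @ K')" "u \<in> \<kappa>' x" for x u
  proof (cases "x \<in> interval_part K")
    case True
    then show ?thesis using rk that(2) unfolding \<kappa>'_def r'_def ranking_strategy_def by auto
  next
    case False
    then show ?thesis using new that(2) unfolding \<kappa>'_def by auto
  qed
  ultimately have "ranking_strategy U f (interval_part (K @ K')) \<Omega> \<kappa>' r'"
    unfolding ranking_strategy_def by blast
  moreover have "\<forall>x\<in>interval_part (K @ K'). r' x \<le> Suc N"
    using bound unfolding r'_def by auto
  ultimately show ?case by blast
qed

lemma certified_controller_subset_Win:
  assumes "certified_controller U F XX \<Omega> K" and "\<forall>u\<in>U. is_inclusion_fun XX (f u) (F u)"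
  shows "interval_part K \<subseteq> Win 0 U f XX \<Omega>"
  using certified_controller_ranking[OF assms] ranking_strategy_subset_Win
    certified_controller_subset[OF assms(1)] by blast

section \<open>Completeness: rejected points are losing\<close>

definition escapes ::
  "real \<Rightarrow> 'u set \<Rightarrow> ('u \<Rightarrow> real^'n::finite \<Rightarrow> real^'n) \<Rightarrow> real^'n \<Rightarrow> (real^'n) set \<Rightarrow> bool" where
  "escapes \<delta> U f p A \<longleftrightarrow> (\<forall>u\<in>U. \<exists>y. infnorm (y - f u p) \<le> \<delta> \<and> y \<notin> A)"

lemma escaping_run:
  assumes ws: "winning_strategy \<delta> U f XX \<Omega> \<kappa> x0" and "x0 \<notin> A"
    and escape: "\<forall>p\<in>XX - A. escapes \<delta> U f p (T p)" and "\<forall>p. A \<subseteq> T p"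
  shows "\<exists>xs. \<forall>k. prefix_run \<delta> f \<kappa> x0 xs k \<and> xs k \<notin> A \<and> xs (Suc k) \<notin> T (xs k)"
proof -
  define nxt where "nxt p = (SOME y. (\<exists>u\<in>\<kappa> p. infnorm (y - f u p) \<le> \<delta>) \<and> y \<notin> T p)" for p
  define xs where "xs k = (nxt ^^ k) x0" for k
  have nxt: "(\<exists>u\<in>\<kappa> p. infnorm (nxt p - f u p) \<le> \<delta>) \<and> nxt p \<notin> T p"
    if p: "p \<in> XX" "p \<notin> A" "\<kappa> p \<noteq> {}" for p
  proof -
    obtain u where "u \<in> \<kappa> p" "u \<in> U" using p(3) ws unfolding winning_strategy_def by blast
    then have "\<exists>y. (\<exists>u\<in>\<kappa> p. infnorm (y - f u p) \<le> \<delta>) \<and> y \<notin> T p"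
      using escape p(1,2) unfolding escapes_def by blast
    then show ?thesis unfolding nxt_def by (rule someI_ex)
  qed
  have xs_Suc: "xs (Suc k) = nxt (xs k)" for k by (simp add: xs_def)
  have run: "prefix_run \<delta> f \<kappa> x0 xs k \<and> xs k \<notin> A \<and> xs (Suc k) \<notin> T (xs k)" for k
  proof (induction k)
    case 0
    have "xs 0 = x0" by (simp add: xs_def)
    then have pr: "prefix_run \<delta> f \<kappa> x0 xs 0" by (simp add: prefix_run_def)
    then have "xs 0 \<in> XX" "\<kappa> (xs 0) \<noteq> {}" using ws unfolding winning_strategy_def by blast+
    then show ?case using pr \<open>xs 0 = x0\<close> \<open>x0 \<notin> A\<close> nxt[of "xs 0"] xs_Suc by simp
  next
    case (Suc k)
    then have "xs k \<in> XX" "\<kappa> (xs k) \<noteq> {}" using ws unfolding winning_strategy_def by blast+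
    then have pr: "prefix_run \<delta> f \<kappa> x0 xs (Suc k)" and notA: "xs (Suc k) \<notin> A"
      using nxt[of "xs k"] Suc.IH assms(4) unfolding xs_Suc prefix_run_def by (auto simp: less_Suc_eq)
    then have "xs (Suc k) \<in> XX" "\<kappa> (xs (Suc k)) \<noteq> {}" using ws unfolding winning_strategy_def by blast+
    then show ?case using pr notA nxt[of "xs (Suc k)"] xs_Suc by simp
  qed
  then show ?thesis by blast
qed

lemma descent_returns_to_zero:
  fixes r :: "nat \<Rightarrow> nat"
  assumes "\<And>k. 0 < r k \<Longrightarrow> r (Suc k) < r k"
  shows "\<exists>k'\<ge>k. r k' = 0"
proof (induction "r k" arbitrary: k rule: less_induct)
  case less
  show ?case
  proof (cases "r k = 0")
    case False
    then obtain k' where "k' \<ge> Suc k" "r k' = 0" using less assms[of k] by blast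
    then show ?thesis by (intro exI[of _ k']) simp
  qed blast
qed

text \<open>The disturbance keeps the state outside \<open>A\<close>, and from a point of positive rank it moves to
  a point of smaller rank; so a run from outside \<open>A\<close> visits rank \<open>0\<close> infinitely often, and
  those points lie outside \<open>\<Omega>\<close>.\<close>
lemma Win_subset_of_escape_rank:
  fixes rk :: "real^'n::finite \<Rightarrow> nat"
  assumes escape: "\<forall>p\<in>XX - A. escapes \<delta> U f p (A \<union> {y. 0 < rk p \<and> rk p \<le> rk y})"
    and pos: "\<forall>p\<in>\<Omega> - A. 0 < rk p"
  shows "Win \<delta> U f XX \<Omega> \<subseteq> A"
proof
  fix x0 assume x0: "x0 \<in> Win \<delta> U f XX \<Omega>"
  show "x0 \<in> A"
  proof (rule ccontr)
    assume "x0 \<notin> A"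
    obtain \<kappa> where ws: "winning_strategy \<delta> U f XX \<Omega> \<kappa> x0" using x0 unfolding Win_def by blast
    obtain xs where run: "\<forall>k. prefix_run \<delta> f \<kappa> x0 xs k \<and> xs k \<notin> A \<and>
        xs (Suc k) \<notin> A \<union> {y. 0 < rk (xs k) \<and> rk (xs k) \<le> rk y}"
      using escaping_run[OF ws \<open>x0 \<notin> A\<close> escape] by blast
    obtain N where N: "\<forall>k\<ge>N. xs k \<in> \<Omega>" using ws run unfolding winning_strategy_def by blast
    have "0 < rk (xs k) \<Longrightarrow> rk (xs (Suc k)) < rk (xs k)" for k
      using run[rule_format, of k] by auto
    then obtain k where "k \<ge> N" and rk0: "rk (xs k) = 0"
      using descent_returns_to_zero[of "\<lambda>k. rk (xs k)" N] by blast
    then have "xs k \<in> \<Omega> - A" using N run by blast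
    then have "0 < rk (xs k)" using pos by blast
    then show False using rk0 by simp
  qed
qed

inductive peel_chain :: "('a \<Rightarrow> 'a set \<Rightarrow> bool) \<Rightarrow> 'a set \<Rightarrow> 'a set \<Rightarrow> bool" for esc where
  refl: "peel_chain esc A A"
| step: "peel_chain esc A B \<Longrightarrow> C \<subseteq> B \<Longrightarrow> \<forall>p\<in>B - C. esc p B \<Longrightarrow> peel_chain esc A C"

lemma peel_chain_subset: "peel_chain esc A B \<Longrightarrow> B \<subseteq> A"
  by (induction rule: peel_chain.induct) auto

text \<open>Points peeled off later get larger ranks, so the set a point of rank \<open>j\<close> was peeled off
  consists of the final set and the points of rank at least \<open>j\<close>.\<close>
lemma peel_chain_rank:
  assumes "peel_chain esc A B"
  shows "\<exists>rk N. (\<forall>p. 0 < rk p \<longleftrightarrow> p \<in> A - B) \<and> (\<forall>p. rk p \<le> (N::nat)) \<and>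
    (\<forall>p\<in>A - B. esc p (B \<union> {y. rk p \<le> rk y}))"
  using assms
proof (induction rule: peel_chain.induct)
  case refl
  show ?case by (rule exI[of _ "\<lambda>_. 0"]) auto
next
  case (step A B C)
  obtain rk :: "'a \<Rightarrow> nat" and N where rk_pos: "\<forall>p. 0 < rk p \<longleftrightarrow> p \<in> A - B" and bound: "\<forall>p. rk p \<le> N"
    and esc: "\<forall>p\<in>A - B. esc p (B \<union> {y. rk p \<le> rk y})" using step.IH by blast
  define rk' where "rk' p = (if p \<in> B - C then Suc N else rk p)" for p
  have BA: "B \<subseteq> A" using peel_chain_subset[OF step.hyps(1)] .
  have "0 < rk' p \<longleftrightarrow> p \<in> A - C" for p
    using rk_pos BA step.hyps(2) unfolding rk'_def by auto
  moreover have "\<forall>p. rk' p \<le> Suc N" using bound unfolding rk'_def by (simp add: le_SucI)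
  moreover have "esc p (C \<union> {y. rk' p \<le> rk' y})" if "p \<in> A - C" for p
  proof (cases "p \<in> B")
    case True
    have "Suc N \<le> rk' y \<longleftrightarrow> y \<in> B - C" for y
      using bound[rule_format, of y] unfolding rk'_def by auto
    moreover have "rk' p = Suc N" using True that unfolding rk'_def by simp
    ultimately have "C \<union> {y. rk' p \<le> rk' y} = B" using step.hyps(2) by auto
    then show ?thesis using step.hyps(3) True that by simp
  next
    case False
    have "C \<union> {y. rk' p \<le> rk' y} = B \<union> {y. rk p \<le> rk y}"
      using False bound step.hyps(2) unfolding rk'_def by (auto simp: le_SucI)
    then show ?thesis using esc False that by simp
  qed
  ultimately show ?case by blast
qed

lemma Win_subset_of_peel_chain:
  fixes f :: "'u \<Rightarrow> real^'n::finite \<Rightarrow> real^'n"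
  assumes escape: "\<And>p A. esc p A \<Longrightarrow> escapes \<delta> U f p A"
    and "peel_chain esc X0 A" and "\<Omega> \<subseteq> X0" and outside: "\<forall>p\<in>XX - X0. esc p A"
  shows "Win \<delta> U f XX \<Omega> \<subseteq> A"
proof -
  obtain rk :: "real^'n \<Rightarrow> nat" where rk_pos: "\<forall>p. 0 < rk p \<longleftrightarrow> p \<in> X0 - A"
    and esc: "\<forall>p\<in>X0 - A. esc p (A \<union> {y. rk p \<le> rk y})"
    using peel_chain_rank[OF assms(2)] by blast
  show ?thesis
  proof (rule Win_subset_of_escape_rank)
    show "\<forall>p\<in>XX - A. escapes \<delta> U f p (A \<union> {y. 0 < rk p \<and> rk p \<le> rk y})"
    proof
      fix p assume p: "p \<in> XX - A"
      show "escapes \<delta> U f p (A \<union> {y. 0 < rk p \<and> rk p \<le> rk y})"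
      proof (cases "p \<in> X0")
        case True
        then have "A \<union> {y. 0 < rk p \<and> rk p \<le> rk y} = A \<union> {y. rk p \<le> rk y}"
          using p rk_pos by auto
        then show ?thesis using escape esc True p by simp
      next
        case False
        then have "A \<union> {y. 0 < rk p \<and> rk p \<le> rk y} = A" using rk_pos by auto
        then show ?thesis using escape outside False p by simp
      qed
    qed
    show "\<forall>p\<in>\<Omega> - A. 0 < rk p" using rk_pos \<open>\<Omega> \<subseteq> X0\<close> by blast
  qed
qed

definition rejected ::
  "'u set \<Rightarrow> ('u \<Rightarrow> 'n::finite box \<Rightarrow> 'n box) \<Rightarrow> real \<Rightarrow> (real^'n) set \<Rightarrow> real^'n \<Rightarrow> (real^'n) set \<Rightarrow> bool"
  where
  "rejected U F eps XX p A \<longleftrightarrow> (\<exists>B. valid_box B \<and> box_set B \<subseteq> XX \<and> p \<in> box_set B \<and>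
     ((\<forall>u\<in>U. box_set (F u B) \<inter> A = {}) \<or> wid B < eps \<and> (\<forall>u\<in>U. \<not> box_set (F u B) \<subseteq> A)))"

lemma rejected_of_cpred_output:
  assumes "cpred_output U F Y eps P L K Xu DX Xc"
    and "\<And>B. P B \<Longrightarrow> valid_box B \<and> box_set B \<subseteq> XX"
    and "p \<in> boxes_set L" "p \<notin> boxes_set Xu"
  shows "rejected U F eps XX p Y"
proof -
  obtain B where B: "B \<in> set DX \<union> set Xc" "p \<in> box_set B"
    using assms(1,3,4) unfolding cpred_output_def boxes_set_def by auto
  then have "P B" using assms(1) unfolding cpred_output_def by blast
  then show ?thesis using B assms(1,2) unfolding rejected_def cpred_output_def by blast
qed

text \<open>A rejected box is either mapped away from \<open>A\<close> by every control, or it is so small that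
  the image box, of width at most \<open>\<rho> * eps \<le> \<delta>\<close>, contains a point outside \<open>A\<close> within
  distance \<open>\<delta>\<close> of the true successor.\<close>
lemma rejected_escapes:
  assumes incl: "\<forall>u\<in>U. is_inclusion_fun XX (f u) (F u)"
    and width: "\<forall>u\<in>U. \<forall>B. valid_box B \<and> box_set B \<subseteq> XX \<longrightarrow> wid (F u B) \<le> \<rho> * wid B"
    and "\<rho> > 0" and "\<rho> * eps \<le> \<delta>" and "\<delta> \<ge> 0"
    and "rejected U F eps XX p A"
  shows "escapes \<delta> U f p A"
  unfolding escapes_def
proof
  fix u assume "u \<in> U"
  obtain B where B: "valid_box B" "box_set B \<subseteq> XX" "p \<in> box_set B"
    and cases: "(\<forall>u\<in>U. box_set (F u B) \<inter> A = {}) \<or> wid B < eps \<and> (\<forall>u\<in>U. \<not> box_set (F u B) \<subseteq> A)"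
    using assms(6) unfolding rejected_def by blast
  have fp: "f u p \<in> box_set (F u B)"
    using incl \<open>u \<in> U\<close> B unfolding is_inclusion_fun_def by blast
  from cases show "\<exists>y. infnorm (y - f u p) \<le> \<delta> \<and> y \<notin> A"
  proof
    assume "\<forall>u\<in>U. box_set (F u B) \<inter> A = {}"
    then show ?thesis using fp \<open>u \<in> U\<close> \<open>\<delta> \<ge> 0\<close> by (intro exI[of _ "f u p"]) (auto simp: infnorm_0)
  next
    assume small: "wid B < eps \<and> (\<forall>u\<in>U. \<not> box_set (F u B) \<subseteq> A)"
    then obtain y where y: "y \<in> box_set (F u B)" "y \<notin> A" using \<open>u \<in> U\<close> by blast
    have "infnorm (y - f u p) \<le> wid (F u B)" using y(1) fp by (rule infnorm_diff_le_wid)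
    also have "\<dots> \<le> \<rho> * wid B" using width \<open>u \<in> U\<close> B by blast
    also have "\<dots> \<le> \<rho> * eps" using small \<open>\<rho> > 0\<close> by simp
    also have "\<dots> \<le> \<delta>" by fact
    finally show ?thesis using y(2) by blast
  qed
qed

section \<open>Loop invariants of Algorithm 3\<close>

text \<open>\<open>R\<close> is a finite set of boxes containing every box the algorithm can ever handle: the
  initial boxes and all boxes obtained from them by bisection.\<close>
locale algorithm3_setting =
  fixes U :: "'u set" and F :: "'u \<Rightarrow> 'n::finite box \<Rightarrow> 'n box" and eps :: real
    and XX \<Omega> Outside :: "(real^'n) set" and R :: "'n box set"
  assumes eps_pos: "eps > 0" and finite_R: "finite R"
    and valid_R: "\<And>B. B \<in> R \<Longrightarrow> valid_box B"
    and bisect_R: "\<And>B. B \<in> R \<Longrightarrow> \<not> wid B < eps \<Longrightarrow> fst (bisect B) \<in> R \<and> snd (bisect B) \<in> R"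
    and \<Omega>_subset: "\<Omega> \<subseteq> XX"
begin

definition grid_box :: "(real^'n) set \<Rightarrow> 'n box \<Rightarrow> bool" where
  "grid_box S B \<longleftrightarrow> B \<in> R \<and> box_set B \<subseteq> S"

lemma cpred_grid_box:
  assumes "\<forall>B\<in>set L. grid_box S B"
  shows "\<exists>K Xu DX Xc. cpred U F L Y eps = Some (K, Xu, DX, Xc) \<and>
    cpred_output U F Y eps (grid_box S) L K Xu DX Xc"
proof (rule cpred_output[OF eps_pos _ _ assms])
  show "valid_box B" if "grid_box S B" for B using that valid_R unfolding grid_box_def by blast
  show "grid_box S (fst (bisect B)) \<and> grid_box S (snd (bisect B))"
    if "grid_box S B" "\<not> wid B < eps" for B
    using that bisect_R box_set_bisect[OF valid_R] unfolding grid_box_def by blast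
qed

lemma rejected_of_cpred_grid_box:
  assumes "cpred_output U F Y eps (grid_box S) L K Xu DX Xc" and "S \<subseteq> XX"
    and "p \<in> boxes_set L" "p \<notin> boxes_set Xu"
  shows "rejected U F eps XX p Y"
  using assms(1) _ assms(3,4)
  by (rule rejected_of_cpred_output) (use assms(2) valid_R in \<open>auto simp: grid_box_def\<close>)

lemma card_boxes_below_less:
  assumes "set L \<subseteq> R" and "A \<subseteq> boxes_set L" and "A \<noteq> boxes_set L"
  shows "card {B\<in>R. box_set B \<subseteq> A} < card {B\<in>R. box_set B \<subseteq> boxes_set L}"
proof (rule psubset_card_mono)
  show "finite {B\<in>R. box_set B \<subseteq> boxes_set L}" using finite_R by simp
  obtain B where "B \<in> set L" "\<not> box_set B \<subseteq> A"
    using assms(2,3) unfolding boxes_set_def by blast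
  then show "{B\<in>R. box_set B \<subseteq> A} \<subset> {B\<in>R. box_set B \<subseteq> boxes_set L}"
    using assms box_set_subset_boxes_set[of B L] by blast
qed

text \<open>The second disjunct covers the initial state, where \<open>X = {}\<close> and no controls have
  been computed for \<open>V\<close> yet.\<close>
definition inner_inv ::
  "'n box list \<Rightarrow> (real^'n) set \<Rightarrow> (real^'n) set \<Rightarrow> (real^'n) set \<Rightarrow> 'n box list \<Rightarrow>
   'n box list \<Rightarrow> 'n box list \<Rightarrow> ('n box \<times> 'u) list \<Rightarrow> bool" where
  "inner_inv Z S0 X0 X Xt V G2 Kv \<longleftrightarrow> Xt = Z @ V \<and> (map fst Kv = V \<or> X = {} \<and> Kv = []) \<and>
     (\<forall>p\<in>set Kv. snd p \<in> U \<and> box_set (F (snd p) (fst p)) \<subseteq> X) \<and>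
     (\<forall>B\<in>set V. grid_box \<Omega> B) \<and> (\<forall>B\<in>set G2. grid_box \<Omega> B) \<and>
     S0 \<subseteq> boxes_set V \<union> boxes_set G2 \<and> peel_chain (rejected U F eps XX) X0 (boxes_set Xt)"

definition inner_result ::
  "'n box list \<Rightarrow> (real^'n) set \<Rightarrow> (real^'n) set \<Rightarrow> 'n box list \<Rightarrow> 'n box list \<Rightarrow>
   ('n box \<times> 'u) list \<Rightarrow> bool" where
  "inner_result Z S0 X0 X G2 Kv \<longleftrightarrow> X = Z @ map fst Kv \<and>
     (\<forall>p\<in>set Kv. snd p \<in> U \<and> box_set (F (snd p) (fst p)) \<subseteq> boxes_set X \<and> grid_box \<Omega> (fst p)) \<and>
     (\<forall>B\<in>set G2. grid_box \<Omega> B) \<and> S0 \<subseteq> interval_part Kv \<union> boxes_set G2 \<and>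
     peel_chain (rejected U F eps XX) X0 (boxes_set X)"

lemma inner_result_of_fixpoint:
  assumes "inner_inv Z S0 X0 X Xt V G2 Kv" and "boxes_set Xt = X"
  shows "inner_result Z S0 X0 Xt G2 Kv"
proof -
  have V: "V = map fst Kv"
  proof (cases "map fst Kv = V")
    case False
    then have "boxes_set V = {}" and "Kv = []" using assms unfolding inner_inv_def by auto
    moreover have "B \<notin> set V" for B
    proof
      assume "B \<in> set V"
      moreover have "valid_box B" if "B \<in> set V"
        using assms(1) valid_R that unfolding inner_inv_def grid_box_def by blast
      ultimately have "fst B \<in> boxes_set V" using fst_in_box_set unfolding boxes_set_def by blast
      then show False using \<open>boxes_set V = {}\<close> by simp
    qed
    ultimately show ?thesis by (cases V) auto
  qed simp
  then have "grid_box \<Omega> (fst p)" if "p \<in> set Kv" for p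
    using assms(1) that unfolding inner_inv_def by auto
  then show ?thesis
    using assms V unfolding inner_inv_def inner_result_def by (auto simp: interval_part_eq_boxes_set)
qed

lemma inner_inv_step:
  assumes inv: "inner_inv Z S0 X0 X Xt V G2 Kv"
    and out: "cpred_output U F (boxes_set Xt) eps (grid_box \<Omega>) V Kv' Vu DV Vc"
  shows "inner_inv Z S0 X0 (boxes_set Xt) (Z @ Vu) Vu (G2 @ DV @ Vc) Kv'"
proof -
  have Xt: "Xt = Z @ V" and chain: "peel_chain (rejected U F eps XX) X0 (boxes_set Xt)"
    using inv unfolding inner_inv_def by blast+
  have cover: "boxes_set V = boxes_set Vu \<union> boxes_set DV \<union> boxes_set Vc"
    using out unfolding cpred_output_def by blast
  have "boxes_set (Z @ Vu) \<subseteq> boxes_set Xt" using cover Xt by auto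
  then have "peel_chain (rejected U F eps XX) X0 (boxes_set (Z @ Vu))"
    by (rule peel_chain.step[OF chain]) (use rejected_of_cpred_grid_box[OF out \<Omega>_subset] Xt in auto)
  then show ?thesis
    using inv out cover unfolding inner_inv_def cpred_output_def by auto
qed

text \<open>The measure decreases: either the candidate set \<open>boxes_set Xt\<close> shrinks, or it stays
  put and the loop stops in the next round.\<close>
lemma inner_loop:
  assumes "set Z \<subseteq> R"
  shows "inner_inv Z S0 X0 X Xt V G2 Kv \<Longrightarrow> \<exists>X' G2' Kv'.
    alg3_inner U F eps Z X Xt V G2 Kv = Some (X', G2', Kv') \<and> inner_result Z S0 X0 X' G2' Kv'"
proof (induction "card {B\<in>R. box_set B \<subseteq> boxes_set Xt} + (if boxes_set Xt = X then 0 else 1)"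
    arbitrary: X Xt V G2 Kv rule: less_induct)
  case less
  show ?case
  proof (cases "boxes_set Xt = X")
    case True
    then show ?thesis
      using inner_result_of_fixpoint[OF less.prems] by (subst alg3_inner.simps) simp
  next
    case False
    have V: "\<forall>B\<in>set V. grid_box \<Omega> B" and Xt: "Xt = Z @ V"
      using less.prems unfolding inner_inv_def by blast+
    obtain Kv' Vu DV Vc where run: "cpred U F V (boxes_set Xt) eps = Some (Kv', Vu, DV, Vc)"
      and out: "cpred_output U F (boxes_set Xt) eps (grid_box \<Omega>) V Kv' Vu DV Vc"
      using cpred_grid_box[OF V] by blast
    have inv': "inner_inv Z S0 X0 (boxes_set Xt) (Z @ Vu) Vu (G2 @ DV @ Vc) Kv'"
      using inner_inv_step[OF less.prems out] .
    have XtR: "set Xt \<subseteq> R" using assms V Xt unfolding grid_box_def by auto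
    have sub: "boxes_set (Z @ Vu) \<subseteq> boxes_set Xt"
      using out Xt unfolding cpred_output_def by auto
    have "card {B\<in>R. box_set B \<subseteq> boxes_set (Z @ Vu)} \<le> card {B\<in>R. box_set B \<subseteq> boxes_set Xt}"
      using sub finite_R by (intro card_mono) auto
    moreover have "boxes_set (Z @ Vu) \<noteq> boxes_set Xt \<Longrightarrow>
        card {B\<in>R. box_set B \<subseteq> boxes_set (Z @ Vu)} < card {B\<in>R. box_set B \<subseteq> boxes_set Xt}"
      using card_boxes_below_less[OF XtR sub] .
    ultimately have "card {B\<in>R. box_set B \<subseteq> boxes_set (Z @ Vu)} +
        (if boxes_set (Z @ Vu) = boxes_set Xt then 0 else 1) <
      card {B\<in>R. box_set B \<subseteq> boxes_set Xt} + (if boxes_set Xt = X then 0 else 1)"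
      using False by auto
    from less.hyps[OF this inv'] show ?thesis
      using False run by (subst alg3_inner.simps) simp
  qed
qed

definition outer_inv :: "'n box list \<Rightarrow> 'n box list \<Rightarrow> 'n box list \<Rightarrow> ('n box \<times> 'u) list \<Rightarrow> bool"
  where
  "outer_inv Yt G1 G2 K \<longleftrightarrow> set Yt \<subseteq> R \<and> (\<forall>B\<in>set G1. grid_box XX B) \<and> (\<forall>B\<in>set G2. grid_box \<Omega> B) \<and>
     Outside \<subseteq> boxes_set Yt \<union> boxes_set G1 \<and> \<Omega> \<subseteq> boxes_set Yt \<union> boxes_set G2 \<and>
     certified_controller U F XX \<Omega> K \<and> boxes_set Yt = interval_part K"

definition outer_progress :: "(real^'n) set \<Rightarrow> 'n box list \<Rightarrow> bool" where
  "outer_progress Y Yt \<longleftrightarrow> Y \<subseteq> boxes_set Yt \<and> (\<forall>p\<in>Outside - boxes_set Yt. rejected U F eps XX p Y) \<and>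
     (\<exists>X0. \<Omega> \<subseteq> X0 \<and> peel_chain (rejected U F eps XX) X0 (boxes_set Yt))"

lemma certified_controller_outer_step:
  assumes "certified_controller U F XX \<Omega> K"
    and Kz: "\<forall>p\<in>set Kz. snd p \<in> U \<and> grid_box XX (fst p) \<and> box_set (F (snd p) (fst p)) \<subseteq> interval_part K"
    and Kv: "\<forall>p\<in>set Kv. snd p \<in> U \<and> grid_box \<Omega> (fst p) \<and>
      box_set (F (snd p) (fst p)) \<subseteq> interval_part (K @ Kz @ Kv)"
  shows "certified_controller U F XX \<Omega> (K @ Kz @ Kv)"
proof (rule certified_controller.append[OF assms(1)], intro ballI)
  fix p assume p: "p \<in> set (Kz @ Kv)"
  obtain B u where Bu: "p = (B, u)" by (cases p)
  from p have "p \<in> set Kz \<or> p \<in> set Kv" by simp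
  then have "u \<in> U \<and> grid_box XX B \<and> box_set (F u B) \<subseteq> interval_part K \<or>
      u \<in> U \<and> grid_box \<Omega> B \<and> box_set (F u B) \<subseteq> interval_part (K @ Kz @ Kv)"
    using Kz Kv unfolding Bu by (metis fst_conv snd_conv)
  then show "case p of (B, u) \<Rightarrow> u \<in> U \<and> valid_box B \<and> box_set B \<subseteq> XX \<and>
      (box_set (F u B) \<subseteq> interval_part K \<or> box_set B \<subseteq> \<Omega> \<and> box_set (F u B) \<subseteq> interval_part (K @ Kz @ Kv))"
    using valid_R \<Omega>_subset unfolding Bu grid_box_def by blast
qed

lemma outer_inv_step:
  assumes inv: "outer_inv Yt G1 G2 K"
    and out_z: "cpred_output U F (boxes_set Yt) eps (grid_box XX) G1 Kz Zu DZ Zc"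
    and res: "inner_result (Yt @ Zu) (boxes_set G2) (boxes_set ((Yt @ Zu) @ G2)) X G2' Kv"
  shows "outer_inv X (DZ @ Zc) G2' (K @ Kz @ Kv) \<and> outer_progress (boxes_set Yt) X"
proof -
  have YtR: "set Yt \<subseteq> R" and cert: "certified_controller U F XX \<Omega> K"
    and Out: "Outside \<subseteq> boxes_set Yt \<union> boxes_set G1" and Om: "\<Omega> \<subseteq> boxes_set Yt \<union> boxes_set G2"
    and YtK: "boxes_set Yt = interval_part K"
    using inv unfolding outer_inv_def by blast+
  have Kz: "map fst Kz = Zu" "\<forall>p\<in>set Kz. snd p \<in> U \<and> box_set (F (snd p) (fst p)) \<subseteq> boxes_set Yt"
    and cover_z: "boxes_set G1 = boxes_set Zu \<union> boxes_set DZ \<union> boxes_set Zc"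
    and grid_z: "\<forall>B\<in>set Zu \<union> set DZ \<union> set Zc. grid_box XX B"
    using out_z unfolding cpred_output_def by blast+
  have X: "X = (Yt @ Zu) @ map fst Kv"
    and Kv: "\<forall>p\<in>set Kv. snd p \<in> U \<and> box_set (F (snd p) (fst p)) \<subseteq> boxes_set X \<and> grid_box \<Omega> (fst p)"
    and G2': "\<forall>B\<in>set G2'. grid_box \<Omega> B" and cover_v: "boxes_set G2 \<subseteq> interval_part Kv \<union> boxes_set G2'"
    and chain: "peel_chain (rejected U F eps XX) (boxes_set ((Yt @ Zu) @ G2)) (boxes_set X)"
    using res unfolding inner_result_def by blast+
  have X_eq: "boxes_set X = boxes_set Yt \<union> boxes_set Zu \<union> interval_part Kv"
    using X by (simp add: interval_part_eq_boxes_set Un_assoc)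
  have XK: "boxes_set X = interval_part (K @ Kz @ Kv)"
    using X_eq YtK Kz(1) by (simp add: interval_part_eq_boxes_set Un_assoc)
  have "grid_box XX (fst p)" if "p \<in> set Kz" for p
    using that Kz(1) grid_z by auto
  then have cert': "certified_controller U F XX \<Omega> (K @ Kz @ Kv)"
    using certified_controller_outer_step[OF cert] Kz(2) Kv YtK XK by simp
  have "set X \<subseteq> R" using YtR grid_z Kv X unfolding grid_box_def by auto
  moreover have "Outside \<subseteq> boxes_set X \<union> boxes_set (DZ @ Zc)" using Out cover_z X_eq by auto
  moreover have "\<Omega> \<subseteq> boxes_set X \<union> boxes_set G2'" using Om cover_v X_eq by auto
  ultimately have "outer_inv X (DZ @ Zc) G2' (K @ Kz @ Kv)"
    using grid_z G2' cert' XK unfolding outer_inv_def by auto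
  moreover have "\<forall>p\<in>Outside - boxes_set X. rejected U F eps XX p (boxes_set Yt)"
  proof
    fix p assume "p \<in> Outside - boxes_set X"
    then have "p \<in> boxes_set G1" "p \<notin> boxes_set Zu" using Out X_eq by auto
    then show "rejected U F eps XX p (boxes_set Yt)"
      by (rule rejected_of_cpred_grid_box[OF out_z subset_refl])
  qed
  moreover have "\<Omega> \<subseteq> boxes_set ((Yt @ Zu) @ G2)" using Om by auto
  ultimately show ?thesis using X_eq chain unfolding outer_progress_def by blast
qed

lemma outer_step:
  assumes "outer_inv Yt G1 G2 K"
  shows "\<exists>Yt' G1' G2' K'. (\<forall>Y. boxes_set Yt \<noteq> Y \<longrightarrow>
      alg3_outer U F eps Y Yt G1 G2 K = alg3_outer U F eps (boxes_set Yt) Yt' G1' G2' K') \<and>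
    outer_inv Yt' G1' G2' K' \<and> outer_progress (boxes_set Yt) Yt'"
proof -
  have G1: "\<forall>B\<in>set G1. grid_box XX B" and G2: "\<forall>B\<in>set G2. grid_box \<Omega> B" and YtR: "set Yt \<subseteq> R"
    using assms unfolding outer_inv_def by blast+
  obtain Kz Zu DZ Zc where run_z: "cpred U F G1 (boxes_set Yt) eps = Some (Kz, Zu, DZ, Zc)"
    and out_z: "cpred_output U F (boxes_set Yt) eps (grid_box XX) G1 Kz Zu DZ Zc"
    using cpred_grid_box[OF G1] by blast
  have "set (Yt @ Zu) \<subseteq> R" using YtR out_z unfolding cpred_output_def grid_box_def by auto
  moreover have "inner_inv (Yt @ Zu) (boxes_set G2) (boxes_set ((Yt @ Zu) @ G2)) {} ((Yt @ Zu) @ G2) G2 [] []"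
    using G2 unfolding inner_inv_def by (auto intro: peel_chain.refl)
  ultimately obtain X G2' Kv where
    run_v: "alg3_inner U F eps (Yt @ Zu) {} ((Yt @ Zu) @ G2) G2 [] [] = Some (X, G2', Kv)"
    and res: "inner_result (Yt @ Zu) (boxes_set G2) (boxes_set ((Yt @ Zu) @ G2)) X G2' Kv"
    using inner_loop by blast
  have "alg3_outer U F eps Y Yt G1 G2 K =
      alg3_outer U F eps (boxes_set Yt) X (DZ @ Zc) G2' (K @ Kz @ Kv)" if "boxes_set Yt \<noteq> Y" for Y
    using that run_v by (subst alg3_outer.simps[of U F eps Y]) (simp add: run_z)
  then show ?thesis using outer_inv_step[OF assms out_z res] by blast
qed

definition algorithm3_result :: "('n box \<times> 'u) list \<Rightarrow> bool" where
  "algorithm3_result K \<longleftrightarrow> certified_controller U F XX \<Omega> K \<and>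
     (\<forall>p\<in>Outside - interval_part K. rejected U F eps XX p (interval_part K)) \<and>
     (\<exists>X0. \<Omega> \<subseteq> X0 \<and> peel_chain (rejected U F eps XX) X0 (interval_part K))"

lemma outer_loop:
  "outer_inv Yt G1 G2 K \<Longrightarrow> outer_progress Y Yt \<Longrightarrow>
    \<exists>K'. alg3_outer U F eps Y Yt G1 G2 K = Some K' \<and> algorithm3_result K'"
proof (induction "card R - card {B\<in>R. box_set B \<subseteq> Y}" arbitrary: Y Yt G1 G2 K rule: less_induct)
  case less
  show ?case
  proof (cases "boxes_set Yt = Y")
    case True
    then show ?thesis using less.prems unfolding outer_inv_def outer_progress_def algorithm3_result_def
      by (subst alg3_outer.simps) auto
  next
    case False
    obtain Yt' G1' G2' K' where run: "alg3_outer U F eps Y Yt G1 G2 K =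
        alg3_outer U F eps (boxes_set Yt) Yt' G1' G2' K'"
      and inv: "outer_inv Yt' G1' G2' K'" and progress: "outer_progress (boxes_set Yt) Yt'"
      using outer_step[OF less.prems(1)] False by blast
    have "set Yt \<subseteq> R" and "Y \<subseteq> boxes_set Yt"
      using less.prems unfolding outer_inv_def outer_progress_def by blast+
    then have "card {B\<in>R. box_set B \<subseteq> Y} < card {B\<in>R. box_set B \<subseteq> boxes_set Yt}"
      using card_boxes_below_less False by blast
    moreover have "card {B\<in>R. box_set B \<subseteq> boxes_set Yt} \<le> card R"
      using finite_R by (intro card_mono) auto
    ultimately have "card R - card {B\<in>R. box_set B \<subseteq> boxes_set Yt} < card R - card {B\<in>R. box_set B \<subseteq> Y}"
      by linarith
    then show ?thesis using less.hyps inv progress run by simp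
  qed
qed

lemma algorithm3_terminates_with_result:
  assumes "XX \<noteq> {}" and "\<forall>B\<in>set G1. grid_box XX B" and "\<forall>B\<in>set G2. grid_box \<Omega> B"
    and "Outside \<subseteq> boxes_set G1" and "\<Omega> \<subseteq> boxes_set G2"
  shows "\<exists>K. algorithm3 U F eps XX G1 G2 = Some K \<and> algorithm3_result K"
proof -
  have "outer_inv [] G1 G2 []"
    unfolding outer_inv_def
  proof (intro conjI)
    show "certified_controller U F XX \<Omega> []" by (rule certified_controller.Nil)
    show "Outside \<subseteq> boxes_set [] \<union> boxes_set G1" using assms(4) by simp
    show "\<Omega> \<subseteq> boxes_set [] \<union> boxes_set G2" using assms(5) by simp
  qed (simp_all add: assms(2,3))
  then obtain Yt G1' G2' K where run: "\<forall>Y. boxes_set [] \<noteq> Y \<longrightarrow>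
      alg3_outer U F eps Y [] G1 G2 [] = alg3_outer U F eps (boxes_set []) Yt G1' G2' K"
    and "outer_inv Yt G1' G2' K" and "outer_progress (boxes_set []) Yt"
    by (blast dest: outer_step)
  then show ?thesis unfolding algorithm3_def using outer_loop \<open>XX \<noteq> {}\<close> by simp
qed

lemma algorithm3_result_sound:
  assumes "algorithm3_result K" and "\<forall>u\<in>U. is_inclusion_fun XX (f u) (F u)"
  shows "interval_part K \<subseteq> Win 0 U f XX \<Omega>"
  using assms certified_controller_subset_Win unfolding algorithm3_result_def by blast

lemma algorithm3_result_complete:
  fixes f :: "'u \<Rightarrow> real^'n \<Rightarrow> real^'n"
  assumes "algorithm3_result K" and "XX - \<Omega> \<subseteq> Outside"
    and "\<forall>u\<in>U. is_inclusion_fun XX (f u) (F u)"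
    and "\<forall>u\<in>U. \<forall>B. valid_box B \<and> box_set B \<subseteq> XX \<longrightarrow> wid (F u B) \<le> \<rho> * wid B"
    and "\<rho> > 0" and "\<rho> * eps \<le> \<delta>" and "\<delta> \<ge> 0"
  shows "Win \<delta> U f XX \<Omega> \<subseteq> interval_part K"
proof -
  obtain X0 where "\<Omega> \<subseteq> X0" and chain: "peel_chain (rejected U F eps XX) X0 (interval_part K)"
    and outside: "\<forall>p\<in>Outside - interval_part K. rejected U F eps XX p (interval_part K)"
    using assms(1) unfolding algorithm3_result_def by blast
  have "\<forall>p\<in>XX - X0. rejected U F eps XX p (interval_part K)"
    using outside \<open>\<Omega> \<subseteq> X0\<close> peel_chain_subset[OF chain] assms(2) by blast
  then show ?thesis
    using Win_subset_of_peel_chain[OF rejected_escapes[OF assms(3-7)] chain \<open>\<Omega> \<subseteq> X0\<close>] by blast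
qed

end

theorem theorem1:
  fixes f :: "'u \<Rightarrow> real^'n \<Rightarrow> real^'n" and U :: "'u set"
    and XX \<Omega> :: "(real^'n) set" and G1 G2 :: "'n box list"
    and F :: "'u \<Rightarrow> 'n box \<Rightarrow> 'n box" and \<delta> \<rho> \<epsilon> :: real
  assumes "finite U"
    and "\<forall>u\<in>U. continuous_on UNIV (f u)"
    and "compact XX" and "compact \<Omega>" and "\<Omega> \<subseteq> XX"
    and "\<forall>B\<in>set G1 \<union> set G2. valid_box B"
    and "boxes_set G1 = closure (XX - \<Omega>)" and "boxes_set G2 = XX \<inter> \<Omega>"
    and "\<delta> \<ge> 0" and "Win \<delta> U f XX \<Omega> \<noteq> {}"
    and "\<rho> > 0"
    and "\<forall>u\<in>U. is_inclusion_fun XX (f u) (F u)"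
    and "\<forall>u\<in>U. \<forall>B. valid_box B \<and> box_set B \<subseteq> XX \<longrightarrow> wid (F u B) \<le> \<rho> * wid B"
    and "\<epsilon> > 0"
  shows "algorithm3 U F \<epsilon> XX G1 G2 \<noteq> None \<and>
         (\<rho> * \<epsilon> \<le> \<delta> \<longrightarrow>
            Win \<delta> U f XX \<Omega> \<subseteq> interval_part (the (algorithm3 U F \<epsilon> XX G1 G2)) \<and>
            interval_part (the (algorithm3 U F \<epsilon> XX G1 G2)) \<subseteq> Win 0 U f XX \<Omega>)"
proof -
  define R where "R = (bisect_child \<epsilon>)\<^sup>* `` (set G1 \<union> set G2)"
  interpret algorithm3_setting U F \<epsilon> XX \<Omega> "closure (XX - \<Omega>)" R
  proof
    show "finite R" unfolding R_def by (rule finite_bisect_reachable[OF \<open>\<epsilon> > 0\<close>]) simp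
    show "valid_box B" if "B \<in> R" for B
      using valid_box_bisect_reachable[OF that[unfolded R_def]] assms(6) .
    show "fst (bisect B) \<in> R \<and> snd (bisect B) \<in> R" if "B \<in> R" "\<not> wid B < \<epsilon>" for B
      using bisect_reachable_closed that unfolding R_def by blast
  qed fact+
  have outside_XX: "closure (XX - \<Omega>) \<subseteq> XX"
    using closure_minimal[of "XX - \<Omega>" XX] compact_imp_closed[OF assms(3)] by blast
  have "B \<in> R" if "B \<in> set G1 \<union> set G2" for B unfolding R_def using that by blast
  then have "\<forall>B\<in>set G1. grid_box XX B" and "\<forall>B\<in>set G2. grid_box \<Omega> B"
    using assms(7,8) outside_XX box_set_subset_boxes_set unfolding grid_box_def by blast+
  moreover have "XX \<noteq> {}" using assms(10) unfolding Win_def by auto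
  moreover have "\<Omega> \<subseteq> boxes_set G2" using assms(5,8) by simp
  ultimately obtain K where run: "algorithm3 U F \<epsilon> XX G1 G2 = Some K" and res: "algorithm3_result K"
    using algorithm3_terminates_with_result[OF _ _ _ equalityD2[OF assms(7)]] by blast
  moreover have "XX - \<Omega> \<subseteq> closure (XX - \<Omega>)" by (rule closure_subset)
  ultimately show ?thesis
    using algorithm3_result_sound[OF res assms(12)] algorithm3_result_complete[OF res _ assms(12,13,11) _ assms(9)]
    by simp
qed

end
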